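(* Let $L\ge1$, $\alpha\in(\alpha_{L+1},\alpha_L)$ and $K\in\{0,1,\dots,L+1\}$. Then the system $(E_K)$ together with the extra condition $l_{K+2}=0$ has a unique solution $(l_0,\dots,l_{K+2})$, given by $$l_j=\frac{\sin\big(\frac{K+2-j}{2}\omega\big)\sin\big(\frac{j\omega}{2}\big)}{Z},\quad j\in\{0,\dots,K+2\},\qquad Z:=\sum_{i=1}^{K+1}\sin\big(\tfrac{K+2-i}{2}\omega\big)\sin\big(\tfrac{i\omega}{2}\big),$$ and it satisfies $$d_0=-d_{K+1}=-\alpha\,\frac{\sin\big(\frac{K+3}{2}\omega\big)\sin\big(\frac{\omega}{2}\big)}{Z}.$$ Moreover $l_1,\dots,l_{K+1}>0$, and $d_0<0$ if $K\in\{0,\dots,L-1\}$, while $d_0>0$ if $K\in\{L,L+1\}$. Finally, the two displayed formulas also hold when $\alpha=\alpha_L$ and $K\in\{1,\dots,L-1\}$.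
   Context: Define $\alpha_1:=+\infty$ and, for $L\ge2$, $\alpha_L:=\dfrac{1}{1+2\cos(\frac{2\pi}{L+2})}$. For $\alpha>1/3$, let $\omega\in(0,\pi)$ be the unique real with $\cos\omega=\frac{1-\alpha}{2\alpha}$ (so $\alpha\in(\alpha_{L+1},\alpha_L)$ iff $\frac{2\pi}{L+3}<\omega<\frac{2\pi}{L+2}$). For an integer $K\ge0$ and a real vector $(l_0,\dots,l_{K+2})$, set $d_0:=l_0-l_1+\alpha l_2$, $d_j:=-\alpha l_{j-1}+l_j-l_{j+1}+\alpha l_{j+2}$ for $j\in\{1,\dots,K\}$, and $d_{K+1}:=-\alpha l_K+l_{K+1}-l_{K+2}$. The system $(E_K)$ is: $d_1=\dots=d_K=0$, $l_0=0$, and $\sum_{j=1}^{K+1}l_j=1$. *)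

theory Defs
  imports Complex_Main "HOL-Library.Extended_Real"
begin

definition alpha_fin :: "nat \<Rightarrow> real" where
  "alpha_fin L = 1 / (1 + 2 * cos (2 * pi / (real L + 2)))"

definition alphaL :: "nat \<Rightarrow> ereal" where
  "alphaL L = (if L \<le> 1 then \<infinity> else ereal (alpha_fin L))"

definition omega :: "real \<Rightarrow> real" where
  "omega \<alpha> = arccos ((1 - \<alpha>) / (2 * \<alpha>))"

definition dval :: "real \<Rightarrow> nat \<Rightarrow> (nat \<Rightarrow> real) \<Rightarrow> nat \<Rightarrow> real" where
  "dval \<alpha> K l j =
     (if j = 0 then l 0 - l 1 + \<alpha> * l 2
      else if j \<le> K then - \<alpha> * l (j - 1) + l j - l (j + 1) + \<alpha> * l (j + 2)
      else - \<alpha> * l K + l (K + 1) - l (K + 2))"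

definition sysE :: "real \<Rightarrow> nat \<Rightarrow> (nat \<Rightarrow> real) \<Rightarrow> bool" where
  "sysE \<alpha> K l \<longleftrightarrow> (\<forall>j\<in>{1..K}. dval \<alpha> K l j = 0) \<and> l 0 = 0 \<and> (\<Sum>j=1..K+1. l j) = 1"

definition Zc :: "real \<Rightarrow> nat \<Rightarrow> real" where
  "Zc \<alpha> K = (\<Sum>i=1..K+1. sin ((real K + 2 - real i) / 2 * omega \<alpha>) * sin (real i * omega \<alpha> / 2))"

definition lsol :: "real \<Rightarrow> nat \<Rightarrow> nat \<Rightarrow> real" where
  "lsol \<alpha> K j = sin ((real K + 2 - real j) / 2 * omega \<alpha>) * sin (real j * omega \<alpha> / 2) / Zc \<alpha> K"

end

theory Submission imports Defs begin

text \<open>For 1 \<le> j \<le> K the equation d_j = 0 is a third-order linear recurrence whose characteristic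
  polynomial \<alpha> x^3 - x^2 + x - \<alpha> = (x - 1) (\<alpha> x^2 + (\<alpha> - 1) x + \<alpha>) has the roots 1 and
  exp (\<plusminus> i \<omega>), because cos \<omega> = (1 - \<alpha>) / (2 \<alpha>). With l_0 = 0 the solutions are therefore
  A sin (j \<omega>) + B (1 - cos (j \<omega>)); as long as sin ((K + 2) \<omega> / 2) \<noteq> 0, the condition l_(K+2) = 0
  leaves the single line spanned by sin ((K + 2 - j) \<omega> / 2) sin (j \<omega> / 2), and the normalisation
  picks the point on it. Positivity and the signs of d_0 reduce to locating (K + 1) \<omega> and
  (K + 3) \<omega> relative to 2 \<pi>, which the range of \<alpha> controls through
  2 \<pi> / (L + 3) < \<omega> < 2 \<pi> / (L + 2).\<close>

definition rec_defect :: "real \<Rightarrow> (nat \<Rightarrow> real) \<Rightarrow> nat \<Rightarrow> real" where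
  "rec_defect \<alpha> l j = - \<alpha> * l (j - 1) + l j - l (j + 1) + \<alpha> * l (j + 2)"

lemma dval_eq_rec_defect: "j \<in> {1..K} \<Longrightarrow> dval \<alpha> K l j = rec_defect \<alpha> l j"
  unfolding dval_def rec_defect_def by auto

lemma sysE_iff_rec_defect:
  "sysE \<alpha> K l \<longleftrightarrow> (\<forall>j\<in>{1..K}. rec_defect \<alpha> l j = 0) \<and> l 0 = 0 \<and> (\<Sum>j=1..K+1. l j) = 1"
  unfolding sysE_def using dval_eq_rec_defect by auto

lemma rec_defect_cong:
  assumes "\<forall>i\<le>j+2. f i = g i"
  shows "rec_defect \<alpha> f j = rec_defect \<alpha> g j"
  using assms unfolding rec_defect_def by simp

lemma rec_defect_scale: "rec_defect \<alpha> (\<lambda>j. c * f j) j = c * rec_defect \<alpha> f j"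
  unfolding rec_defect_def by (simp add: algebra_simps)

lemma rec_defect_zero_unique:
  fixes f g :: "nat \<Rightarrow> real"
  assumes "\<alpha> \<noteq> 0"
    and f: "\<forall>j\<in>{1..K}. rec_defect \<alpha> f j = 0" and g: "\<forall>j\<in>{1..K}. rec_defect \<alpha> g j = 0"
    and init: "\<forall>j\<le>2. f j = g j"
  shows "j \<le> K + 2 \<Longrightarrow> f j = g j"
proof (induction j rule: less_induct)
  case (less j)
  show ?case
  proof (cases "j \<le> 2")
    case True
    then show ?thesis using init by blast
  next
    case False
    define m where "m = j - 3"
    have m: "j = m + 3" using False unfolding m_def by simp
    have "m + 1 \<in> {1..K}" using less.prems m by simp
    then have "rec_defect \<alpha> f (m + 1) = 0" "rec_defect \<alpha> g (m + 1) = 0" using f g by blast+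
    then have "\<alpha> * f (m + 3) = \<alpha> * f m - f (m + 1) + f (m + 2)"
      and "\<alpha> * g (m + 3) = \<alpha> * g m - g (m + 1) + g (m + 2)"
      unfolding rec_defect_def by (simp_all add: algebra_simps numeral_3_eq_3 numeral_2_eq_2)
    moreover have "f m = g m" "f (m + 1) = g (m + 1)" "f (m + 2) = g (m + 2)"
      using less.IH less.prems m by simp_all
    ultimately have "\<alpha> * f j = \<alpha> * g j" using m by simp
    then show ?thesis using \<open>\<alpha> \<noteq> 0\<close> by simp
  qed
qed

definition trig_seq :: "real \<Rightarrow> real \<Rightarrow> real \<Rightarrow> nat \<Rightarrow> real" where
  "trig_seq w A B j = A * sin (real j * w) + B * (1 - cos (real j * w))"

lemma trig_seq_0 [simp]: "trig_seq w A B 0 = 0"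
  unfolding trig_seq_def by simp

lemma rec_defect_trig_seq:
  assumes key: "\<alpha> * (1 + 2 * cos w) = 1" and "1 \<le> j"
  shows "rec_defect \<alpha> (trig_seq w A B) j = 0"
proof -
  define P Q s c where "P = sin (real j * w)" "Q = cos (real j * w)" "s = sin w" "c = cos w"
  have e: "real (j - 1) * w = real j * w - w" "real (j + 1) * w = real j * w + w"
    "real (j + 2) * w = real j * w + 2 * w"
    using \<open>1 \<le> j\<close> by (simp_all add: of_nat_diff algebra_simps)
  have "rec_defect \<alpha> (trig_seq w A B) j
      = - \<alpha> * (A * (P*c - Q*s) + B * (1 - (Q*c + P*s))) + (A*P + B*(1-Q))
        - (A * (P*c + Q*s) + B * (1 - (Q*c - P*s)))
        + \<alpha> * (A * (P*(2*c^2-1) + Q*(2*s*c)) + B * (1 - (Q*(2*c^2-1) - P*(2*s*c))))"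
    unfolding rec_defect_def trig_seq_def e sin_add sin_diff cos_add cos_diff sin_double
      cos_double_cos P_Q_s_c_def
    by (simp add: algebra_simps)
  also have "\<dots> = (1 - \<alpha> * (1 + 2 * c)) * (A * ((1 - c) * P - s * Q) - B * ((1 - c) * Q + s * P))"
    by (simp add: algebra_simps power2_eq_square)
  finally show ?thesis using key unfolding P_Q_s_c_def(4) by simp
qed

lemma trig_seq_interpolates:
  assumes "0 < w" "w < pi"
  obtains A B where "trig_seq w A B 1 = y1" "trig_seq w A B 2 = y2"
proof
  have s: "sin w > 0" using assms by (simp add: sin_gt_zero)
  have c: "cos w < 1" using cos_monotone_0_pi[of 0 w] assms by simp
  define B where "B = (y2 - 2 * cos w * y1) / (2 * (1 - cos w))"
  define A where "A = (y1 - B * (1 - cos w)) / sin w"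
  show 1: "trig_seq w A B 1 = y1" using s unfolding trig_seq_def A_def by simp
  have "trig_seq w A B 2 = 2 * cos w * trig_seq w A B 1 + 2 * (1 - cos w) * B"
    unfolding trig_seq_def of_nat_numeral of_nat_1 mult_1 sin_double cos_double_cos
    by (simp add: algebra_simps power2_eq_square)
  also have "\<dots> = y2" unfolding 1 using c by (simp add: B_def)
  finally show "trig_seq w A B 2 = y2" .
qed

lemma rec_defect_zero_imp_trig_seq:
  fixes l :: "nat \<Rightarrow> real"
  assumes "0 < w" "w < pi" and key: "\<alpha> * (1 + 2 * cos w) = 1"
    and l0: "l 0 = 0" and rec: "\<forall>j\<in>{1..K}. rec_defect \<alpha> l j = 0"
  obtains A B where "\<forall>j\<le>K+2. l j = trig_seq w A B j"
proof -
  obtain A B where AB: "trig_seq w A B 1 = l 1" "trig_seq w A B 2 = l 2"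
    using trig_seq_interpolates[OF assms(1,2)] .
  have "\<forall>j\<le>2. l j = trig_seq w A B j"
    using l0 AB by (auto simp: le_Suc_eq numeral_2_eq_2)
  moreover have "\<forall>j\<in>{1..K}. rec_defect \<alpha> (trig_seq w A B) j = 0"
    using rec_defect_trig_seq[OF key] by simp
  moreover have "\<alpha> \<noteq> 0" using key by auto
  ultimately show ?thesis
    using that rec_defect_zero_unique[OF _ rec] by blast
qed

definition sin_profile :: "nat \<Rightarrow> real \<Rightarrow> nat \<Rightarrow> real" where
  "sin_profile K w j = sin ((real K + 2 - real j) / 2 * w) * sin (real j * w / 2)"

lemma lsol_eq_sin_profile: "lsol \<alpha> K j = sin_profile K (omega \<alpha>) j / Zc \<alpha> K"
  unfolding lsol_def sin_profile_def ..

lemma Zc_eq_sum_sin_profile: "Zc \<alpha> K = (\<Sum>i=1..K+1. sin_profile K (omega \<alpha>) i)"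
  unfolding Zc_def sin_profile_def ..

lemma sin_profile_0 [simp]: "sin_profile K w 0 = 0"
  unfolding sin_profile_def by simp

lemma lsol_0: "lsol \<alpha> K 0 = 0"
  unfolding lsol_def by simp

lemma lsol_end: "lsol \<alpha> K (K + 2) = 0"
  unfolding lsol_def by simp

lemma sin_profile_reflect:
  assumes "j \<le> K + 2"
  shows "sin_profile K w (K + 2 - j) = sin_profile K w j"
proof -
  have "(real K + 2 - real (K + 2 - j)) / 2 * w = real j * w / 2"
    and "real (K + 2 - j) * w / 2 = (real K + 2 - real j) / 2 * w"
    using assms by (simp_all add: of_nat_diff)
  then show ?thesis unfolding sin_profile_def by (simp only: mult.commute)
qed

lemma sin_profile_pos:
  assumes "0 < w" and "(real K + 1) * w < 2 * pi" and "j \<in> {1..K+1}"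
  shows "0 < sin_profile K w j"
proof -
  have j: "1 \<le> real j" "real j \<le> real K + 1" using assms(3) by auto
  have "real j * w \<le> (real K + 1) * w" "(real K + 2 - real j) * w \<le> (real K + 1) * w"
    using j assms(1) by (simp_all add: mult_right_mono)
  then have "real j * w / 2 < pi" "(real K + 2 - real j) / 2 * w < pi"
    using assms(2) by simp_all
  then have "0 < sin (real j * w / 2)" "0 < sin ((real K + 2 - real j) / 2 * w)"
    using j assms(1) by (simp_all add: sin_gt_zero)
  then show ?thesis unfolding sin_profile_def by simp
qed

lemma sin_profile_eq_trig_seq:
  "sin_profile K w = trig_seq w (sin ((real K + 2) / 2 * w) / 2) (- cos ((real K + 2) / 2 * w) / 2)"
proof
  fix j
  define N y where "N = (real K + 2) / 2 * w" and "y = real j * w / 2"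
  have e: "(real K + 2 - real j) / 2 * w = N - y" "real j * w = 2 * y"
    unfolding N_def y_def by (simp_all add: field_simps)
  have "sin_profile K w j = trig_seq w (sin N / 2) (- cos N / 2) j"
    unfolding sin_profile_def trig_seq_def e y_def[symmetric] sin_diff sin_double cos_double_sin
    by (simp add: algebra_simps power2_eq_square)
  then show "sin_profile K w j = trig_seq w (sin ((real K + 2) / 2 * w) / 2) (- cos ((real K + 2) / 2 * w) / 2) j"
    unfolding N_def .
qed

lemma trig_seq_vanishing_at_end:
  assumes "trig_seq w A B (K + 2) = 0" and "sin ((real K + 2) / 2 * w) \<noteq> 0"
  obtains c where "trig_seq w A B = (\<lambda>j. c * sin_profile K w j)"
proof -
  define N where "N = (real K + 2) / 2 * w"
  have "real (K + 2) * w = 2 * N" unfolding N_def by simp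
  then have "A * sin (2 * N) + B * (1 - cos (2 * N)) = 0"
    using assms(1) unfolding trig_seq_def by simp
  then have "2 * sin N * (A * cos N + B * sin N) = 0"
    unfolding sin_double cos_double_sin by (simp add: algebra_simps power2_eq_square)
  then have BA: "B * sin N = - (A * cos N)" using assms(2) unfolding N_def by simp
  define t where "t = A * sin N - B * cos N"
  have "A = t * sin N" "B = - t * cos N"
    using BA sin_cos_squared_add[of N] unfolding t_def by algebra+
  then have "trig_seq w A B = (\<lambda>j. 2 * t * sin_profile K w j)"
    unfolding sin_profile_eq_trig_seq N_def[symmetric] by (auto simp: trig_seq_def algebra_simps)
  then show thesis by (rule that)
qed

lemma omega_gt_third:
  assumes "1 / 3 < \<alpha>"
  shows cos_omega: "cos (omega \<alpha>) = (1 - \<alpha>) / (2 * \<alpha>)"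
    and omega_pos: "0 < omega \<alpha>"
    and omega_less_2pi_3: "omega \<alpha> < 2 * pi / 3"
proof -
  define x where "x = (1 - \<alpha>) / (2 * \<alpha>)"
  have x: "- 1 / 2 < x" "x < 1" using assms unfolding x_def by (simp_all add: field_simps)
  show "cos (omega \<alpha>) = (1 - \<alpha>) / (2 * \<alpha>)"
    using x unfolding omega_def x_def[symmetric] by (simp add: cos_arccos)
  show "0 < omega \<alpha>"
    using arccos_less_arccos[of x 1] x unfolding omega_def x_def[symmetric] by simp
  have "arccos (- 1 / 2) = 2 * pi / 3" by (simp add: arccos_unique cos_120)
  then show "omega \<alpha> < 2 * pi / 3"
    using arccos_less_arccos[of "- 1 / 2" x] x unfolding omega_def x_def[symmetric] by simp
qed

lemma omega_char_eq:
  assumes "1 / 3 < \<alpha>"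
  shows "\<alpha> * (1 + 2 * cos (omega \<alpha>)) = 1"
  using assms by (simp add: cos_omega field_simps)

lemma omega_strict_mono:
  assumes "1 / 3 < a" and "a < b"
  shows "omega a < omega b"
proof -
  have "- 1 \<le> (1 - b) / (2 * b)" "(1 - b) / (2 * b) < (1 - a) / (2 * a)" "(1 - a) / (2 * a) \<le> 1"
    using assms by (simp_all add: field_simps)
  then show ?thesis unfolding omega_def by (rule arccos_less_arccos)
qed

lemma alpha_fin_gt_third_omega:
  assumes "2 \<le> L"
  shows "1 / 3 < alpha_fin L" and "omega (alpha_fin L) = 2 * pi / (real L + 2)"
proof -
  define \<theta> where "\<theta> = 2 * pi / (real L + 2)"
  have \<theta>: "0 < \<theta>" "\<theta> \<le> pi / 2" using assms unfolding \<theta>_def by (simp_all add: field_simps)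
  then have c: "0 \<le> cos \<theta>" "cos \<theta> < 1" using cos_monotone_0_pi[of 0 \<theta>] by (simp_all add: cos_ge_zero)
  show "1 / 3 < alpha_fin L"
    using c unfolding alpha_fin_def \<theta>_def[symmetric] by (simp add: field_simps)
  have "(1 - alpha_fin L) / (2 * alpha_fin L) = cos \<theta>"
    using c unfolding alpha_fin_def \<theta>_def[symmetric] by (simp add: field_simps)
  then show "omega (alpha_fin L) = 2 * pi / (real L + 2)"
    using \<theta> unfolding omega_def \<theta>_def[symmetric] by (simp add: arccos_cos)
qed

lemma omega_between_alphaL:
  assumes "1 \<le> L" and "alphaL (L + 1) < ereal \<alpha>" and "ereal \<alpha> < alphaL L"
  shows "1 / 3 < \<alpha>" and "2 * pi / (real L + 3) < omega \<alpha>" and "omega \<alpha> < 2 * pi / (real L + 2)"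
proof -
  have "alpha_fin (L + 1) < \<alpha>" using assms(1,2) unfolding alphaL_def by simp
  moreover note alpha_fin_gt_third_omega[of "L + 1"]
  ultimately show \<alpha>: "1 / 3 < \<alpha>" and "2 * pi / (real L + 3) < omega \<alpha>"
    using assms(1) omega_strict_mono[of "alpha_fin (L + 1)" \<alpha>] by (simp_all add: add.commute)
  show "omega \<alpha> < 2 * pi / (real L + 2)"
  proof (cases "L = 1")
    case True
    then show ?thesis using omega_less_2pi_3[OF \<alpha>] by simp
  next
    case False
    then have "\<alpha> < alpha_fin L" using assms(1,3) unfolding alphaL_def by simp
    then show ?thesis
      using False assms(1) \<alpha> omega_strict_mono alpha_fin_gt_third_omega(2)[of L] by fastforce
  qed
qed


lemma sysE_cong:
  assumes "\<forall>j\<le>K+2. l j = l' j"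
  shows "sysE \<alpha> K l \<longleftrightarrow> sysE \<alpha> K l'"
proof -
  have "\<forall>j\<in>{1..K}. rec_defect \<alpha> l j = rec_defect \<alpha> l' j"
    using assms by (auto intro: rec_defect_cong)
  moreover have "(\<Sum>j=1..K+1. l j) = (\<Sum>j=1..K+1. l' j)" using assms by simp
  ultimately show ?thesis using assms unfolding sysE_iff_rec_defect by simp
qed

lemma Zc_pos:
  assumes "1 / 3 < \<alpha>" and "(real K + 1) * omega \<alpha> < 2 * pi"
  shows "0 < Zc \<alpha> K"
  unfolding Zc_eq_sum_sin_profile
  using sin_profile_pos[OF omega_pos[OF assms(1)] assms(2)] by (intro sum_pos) auto

lemma lsol_pos:
  assumes "1 / 3 < \<alpha>" and "(real K + 1) * omega \<alpha> < 2 * pi" and "j \<in> {1..K+1}"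
  shows "0 < lsol \<alpha> K j"
  unfolding lsol_eq_sin_profile
  using sin_profile_pos[OF omega_pos[OF assms(1)] assms(2,3)] Zc_pos[OF assms(1,2)] by simp

lemma lsol_solves_sysE:
  assumes "1 / 3 < \<alpha>" and "(real K + 1) * omega \<alpha> < 2 * pi"
  shows "sysE \<alpha> K (lsol \<alpha> K)"
proof -
  have "lsol \<alpha> K = (\<lambda>j. inverse (Zc \<alpha> K) * sin_profile K (omega \<alpha>) j)"
    by (simp add: fun_eq_iff lsol_eq_sin_profile divide_inverse_commute)
  then have "rec_defect \<alpha> (lsol \<alpha> K) j = 0" if "1 \<le> j" for j
    using that omega_char_eq[OF assms(1)]
    by (simp add: rec_defect_scale sin_profile_eq_trig_seq rec_defect_trig_seq)
  moreover have "(\<Sum>j=1..K+1. lsol \<alpha> K j) = 1"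
    using Zc_pos[OF assms]
    unfolding lsol_eq_sin_profile sum_divide_distrib[symmetric] Zc_eq_sum_sin_profile[symmetric] by simp
  ultimately show ?thesis unfolding sysE_iff_rec_defect by (simp add: lsol_eq_sin_profile)
qed

lemma sysE_end_zero_imp_lsol:
  assumes \<alpha>: "1 / 3 < \<alpha>"
    and K1: "(real K + 1) * omega \<alpha> < 2 * pi" and K2: "(real K + 2) * omega \<alpha> \<noteq> 2 * pi"
    and l: "sysE \<alpha> K l" "l (K + 2) = 0"
  shows "\<forall>j\<le>K+2. l j = lsol \<alpha> K j"
proof -
  define w where "w = omega \<alpha>"
  have w: "0 < w" "w < pi" using omega_pos[OF \<alpha>] omega_less_2pi_3[OF \<alpha>] unfolding w_def by simp_all
  obtain A B where AB: "\<forall>j\<le>K+2. l j = trig_seq w A B j"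
    using rec_defect_zero_imp_trig_seq[OF w omega_char_eq[OF \<alpha>, folded w_def]] l(1)
    unfolding sysE_iff_rec_defect by blast
  define N where "N = (real K + 2) / 2 * w"
  have "0 < N" unfolding N_def using w by simp
  moreover have "N < 3 / 2 * pi" "N \<noteq> pi" using w K1 K2 unfolding N_def w_def by (auto simp: field_simps)
  ultimately have "sin N \<noteq> 0"
    using sin_gt_zero[of N] sin_lt_zero[of N] pi_gt_zero by (cases "N < pi") auto
  moreover have "trig_seq w A B (K + 2) = 0" using AB l(2) by simp
  ultimately obtain c where c: "trig_seq w A B = (\<lambda>j. c * sin_profile K w j)"
    using trig_seq_vanishing_at_end unfolding N_def by blast
  have "1 = (\<Sum>j=1..K+1. c * sin_profile K w j)"
    using l(1) AB c unfolding sysE_iff_rec_defect by simp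
  also have "\<dots> = c * Zc \<alpha> K" unfolding Zc_eq_sum_sin_profile w_def sum_distrib_left ..
  finally have "c = 1 / Zc \<alpha> K" using Zc_pos[OF \<alpha> K1] by (simp add: field_simps)
  then show ?thesis using AB c unfolding lsol_eq_sin_profile w_def by simp
qed

lemma sysE_end_zero_iff_lsol:
  assumes "1 / 3 < \<alpha>"
    and "(real K + 1) * omega \<alpha> < 2 * pi" and "(real K + 2) * omega \<alpha> \<noteq> 2 * pi"
  shows "sysE \<alpha> K l \<and> l (K + 2) = 0 \<longleftrightarrow> (\<forall>j\<le>K+2. l j = lsol \<alpha> K j)"
proof
  assume "sysE \<alpha> K l \<and> l (K + 2) = 0"
  then show "\<forall>j\<le>K+2. l j = lsol \<alpha> K j" using sysE_end_zero_imp_lsol[OF assms] by blast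
next
  assume l: "\<forall>j\<le>K+2. l j = lsol \<alpha> K j"
  then have "sysE \<alpha> K l" using sysE_cong[of K l "lsol \<alpha> K" \<alpha>] lsol_solves_sysE[OF assms(1,2)] by simp
  moreover have "l (K + 2) = 0" using l lsol_end[of \<alpha> K] by simp
  ultimately show "sysE \<alpha> K l \<and> l (K + 2) = 0" ..
qed

lemma dval_lsol_last: "dval \<alpha> K (lsol \<alpha> K) (K + 1) = - dval \<alpha> K (lsol \<alpha> K) 0"
proof -
  have "lsol \<alpha> K (K + 1) = lsol \<alpha> K 1" "lsol \<alpha> K K = lsol \<alpha> K 2"
    using sin_profile_reflect[of 1 K "omega \<alpha>"] sin_profile_reflect[of 2 K "omega \<alpha>"]
    by (simp_all add: lsol_eq_sin_profile)
  then show ?thesis using lsol_0 lsol_end unfolding dval_def by simp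
qed

lemma dval_lsol_0:
  assumes "1 / 3 < \<alpha>"
  shows "dval \<alpha> K (lsol \<alpha> K) 0
    = - \<alpha> * (sin ((real K + 3) / 2 * omega \<alpha>) * sin (omega \<alpha> / 2)) / Zc \<alpha> K"
proof -
  define w x y where "w = omega \<alpha>" and "x = w / 2" and "y = (real K + 1) / 2 * w"
  have e: "(real K + 2 - 1) / 2 * w = y" "1 * w / 2 = x" "(real K + 2 - 2) / 2 * w = y - x"
    "2 * w / 2 = 2 * x" "(real K + 3) / 2 * w = y + 2 * x" "w / 2 = x"
    unfolding x_def y_def by (simp_all add: field_simps)
  have key: "\<alpha> * (1 + 2 * cos (2 * x)) = 1" using omega_char_eq[OF assms] unfolding x_def w_def by simp
  have "(- sin_profile K w 1 + \<alpha> * sin_profile K w 2) + \<alpha> * (sin ((real K + 3) / 2 * w) * sin (w / 2))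
      = sin y * sin x * (\<alpha> * (1 + 2 * cos (2 * x)) - 1)"
    unfolding sin_profile_def of_nat_1 of_nat_numeral e sin_add sin_diff sin_double cos_double_cos
    by (simp add: algebra_simps power2_eq_square)
  then have "- sin_profile K w 1 + \<alpha> * sin_profile K w 2
      = - \<alpha> * (sin ((real K + 3) / 2 * w) * sin (w / 2))"
    using key by simp
  moreover have "dval \<alpha> K (lsol \<alpha> K) 0 = (- sin_profile K w 1 + \<alpha> * sin_profile K w 2) / Zc \<alpha> K"
    unfolding dval_def lsol_eq_sin_profile w_def by (simp add: add_divide_distrib diff_divide_distrib)
  ultimately show ?thesis unfolding w_def by simp
qed

lemma dval_lsol_0_neg:
  assumes "1 / 3 < \<alpha>" and "(real K + 3) * omega \<alpha> < 2 * pi"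
  shows "dval \<alpha> K (lsol \<alpha> K) 0 < 0"
proof -
  have w: "0 < omega \<alpha>" "omega \<alpha> < pi" using omega_pos[OF assms(1)] omega_less_2pi_3[OF assms(1)] by simp_all
  then have "(real K + 1) * omega \<alpha> < (real K + 3) * omega \<alpha>" by simp
  then have "0 < Zc \<alpha> K" using assms by (intro Zc_pos) auto
  moreover have "0 < sin ((real K + 3) / 2 * omega \<alpha>)" "0 < sin (omega \<alpha> / 2)"
    using w assms(2) by (simp_all add: sin_gt_zero)
  ultimately show ?thesis using assms(1) by (simp add: dval_lsol_0 divide_neg_pos)
qed

lemma dval_lsol_0_pos:
  assumes "1 / 3 < \<alpha>" and "(real K + 1) * omega \<alpha> < 2 * pi" and "2 * pi < (real K + 3) * omega \<alpha>"
  shows "0 < dval \<alpha> K (lsol \<alpha> K) 0"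
proof -
  have w: "0 < omega \<alpha>" "omega \<alpha> < pi" using omega_pos[OF assms(1)] omega_less_2pi_3[OF assms(1)] by simp_all
  have "sin ((real K + 3) / 2 * omega \<alpha>) < 0"
    using w assms(2,3) by (intro sin_lt_zero) (simp_all add: algebra_simps)
  moreover have "0 < sin (omega \<alpha> / 2)" using w by (simp add: sin_gt_zero)
  ultimately have "\<alpha> * (sin ((real K + 3) / 2 * omega \<alpha>) * sin (omega \<alpha> / 2)) < 0"
    using assms(1) by (simp add: mult_pos_neg mult_neg_pos)
  then show ?thesis
    unfolding dval_lsol_0[OF assms(1)] using Zc_pos[OF assms(1,2)] by (simp add: divide_neg_pos)
qed

lemma lsol_characterisation:
  assumes "1 / 3 < \<alpha>"
    and "(real K + 1) * omega \<alpha> < 2 * pi" and "(real K + 2) * omega \<alpha> \<noteq> 2 * pi"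
  shows "(\<forall>l. (sysE \<alpha> K l \<and> l (K + 2) = 0) \<longleftrightarrow> (\<forall>j\<le>K+2. l j = lsol \<alpha> K j))
       \<and> dval \<alpha> K (lsol \<alpha> K) 0 = - dval \<alpha> K (lsol \<alpha> K) (K + 1)
       \<and> dval \<alpha> K (lsol \<alpha> K) 0
           = - \<alpha> * (sin ((real K + 3) / 2 * omega \<alpha>) * sin (omega \<alpha> / 2)) / Zc \<alpha> K"
  using sysE_end_zero_iff_lsol[OF assms] dval_lsol_last[of \<alpha> K] dval_lsol_0[OF assms(1)] by simp

lemma alpha_fin_admissible:
  assumes "2 \<le> L" and "K < L"
  shows "(real K + 1) * omega (alpha_fin L) < 2 * pi"
    and "(real K + 2) * omega (alpha_fin L) \<noteq> 2 * pi"
proof -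
  define r where "r = 2 * pi / (real L + 2)"
  have r: "omega (alpha_fin L) = r" "0 < r" "(real L + 2) * r = 2 * pi"
    using alpha_fin_gt_third_omega(2)[OF assms(1)] unfolding r_def by simp_all
  have "(real K + 1) * r < (real K + 2) * r" "(real K + 2) * r < (real L + 2) * r"
    using r(2) assms(2) by simp_all
  then show "(real K + 1) * omega (alpha_fin L) < 2 * pi" "(real K + 2) * omega (alpha_fin L) \<noteq> 2 * pi"
    unfolding r(1) r(3) by simp_all
qed

lemma multiples_in_angle_window:
  fixes w :: real
  assumes "0 < w" and lo: "2 * pi < (real L + 3) * w" and hi: "(real L + 2) * w < 2 * pi"
    and "K \<le> L + 1"
  shows "(real K + 1) * w < 2 * pi" and "(real K + 2) * w \<noteq> 2 * pi"
    and "K + 1 \<le> L \<Longrightarrow> (real K + 3) * w < 2 * pi"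
    and "L \<le> K \<Longrightarrow> 2 * pi < (real K + 3) * w"
proof -
  have mono: "a * w \<le> b * w" if "a \<le> b" for a b
    using that \<open>0 < w\<close> by (simp add: mult_right_mono)
  show "(real K + 1) * w < 2 * pi"
    using mono[of "real K + 1" "real L + 2"] \<open>K \<le> L + 1\<close> hi by simp
  show "(real K + 2) * w \<noteq> 2 * pi"
    using mono[of "real K + 2" "real L + 2"] mono[of "real L + 3" "real K + 2"] \<open>K \<le> L + 1\<close> hi lo
    by (cases "K \<le> L") auto
  show "(real K + 3) * w < 2 * pi" if "K + 1 \<le> L"
    using mono[of "real K + 3" "real L + 2"] that hi by simp
  show "2 * pi < (real K + 3) * w" if "L \<le> K"
    using mono[of "real L + 3" "real K + 3"] that lo by simp
qed

theorem mainTheorem8: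
  fixes L K :: nat and \<alpha> :: real
  assumes "L \<ge> 1"
    and "alphaL (L + 1) < ereal \<alpha>" and "ereal \<alpha> < alphaL L"
    and "K \<le> L + 1"
  shows "(\<forall>l. (sysE \<alpha> K l \<and> l (K + 2) = 0) \<longleftrightarrow> (\<forall>j\<le>K+2. l j = lsol \<alpha> K j))
       \<and> dval \<alpha> K (lsol \<alpha> K) 0 = - dval \<alpha> K (lsol \<alpha> K) (K + 1)
       \<and> dval \<alpha> K (lsol \<alpha> K) 0
           = - \<alpha> * (sin ((real K + 3) / 2 * omega \<alpha>) * sin (omega \<alpha> / 2)) / Zc \<alpha> K
       \<and> (\<forall>j\<in>{1..K+1}. lsol \<alpha> K j > 0)
       \<and> (K \<le> L - 1 \<longrightarrow> dval \<alpha> K (lsol \<alpha> K) 0 < 0)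
       \<and> (L \<le> K \<longrightarrow> dval \<alpha> K (lsol \<alpha> K) 0 > 0)
       \<and> (\<forall>K'. 1 \<le> K' \<and> K' \<le> L - 1 \<longrightarrow>
            (let a = alpha_fin L in
              (\<forall>l. (sysE a K' l \<and> l (K' + 2) = 0) \<longleftrightarrow> (\<forall>j\<le>K'+2. l j = lsol a K' j))
              \<and> dval a K' (lsol a K') 0 = - dval a K' (lsol a K') (K' + 1)
              \<and> dval a K' (lsol a K') 0
                  = - a * (sin ((real K' + 3) / 2 * omega a) * sin (omega a / 2)) / Zc a K'))"
    (is "?A \<and> ?B \<and> ?C \<and> ?D \<and> ?E \<and> ?F \<and> ?G")
proof -
  have \<alpha>: "1 / 3 < \<alpha>" and lo: "2 * pi < (real L + 3) * omega \<alpha>" and hi: "(real L + 2) * omega \<alpha> < 2 * pi"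
    using omega_between_alphaL[OF assms(1-3)] by (simp_all add: field_simps)
  note window = multiples_in_angle_window[OF omega_pos[OF \<alpha>] lo hi assms(4)]
  have ?A and ?B and ?C using lsol_characterisation[OF \<alpha> window(1,2)] by blast+
  moreover have ?D using lsol_pos[OF \<alpha> window(1)] by blast
  moreover have ?E using dval_lsol_0_neg[OF \<alpha> window(3)] assms(1) by simp
  moreover have ?F using dval_lsol_0_pos[OF \<alpha> window(1) window(4)] by simp
  moreover have ?G
    unfolding Let_def
    by (intro allI impI, elim conjE) (rule lsol_characterisation[OF alpha_fin_gt_third_omega(1) alpha_fin_admissible]; linarith)
  ultimately show ?thesis by (intro conjI)
qed

end
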